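(* Suppose $\Upsilon=E[\partial\psi(W,\theta_0,\eta_0,\boldsymbol\kappa_0)/\partial\theta]$ exists and there is a neighborhood $\mathcal N$ of $\theta_0$ such that for all folds $\ell$: (i) $\|\hat\eta_\ell-\eta_0\|_\Xi\int\|\hat{\boldsymbol\kappa}_\ell(z)-\boldsymbol\kappa_0(z)\|_\infty^2F_0(dz)\to_p0$; (ii) whenever $\|\eta-\eta_0\|_\Xi E[\|\boldsymbol\kappa(Z)-\boldsymbol\kappa_0(Z)\|_\infty^2]$ is small enough, $\psi(W,\theta,\eta,\boldsymbol\kappa)$ is differentiable in $\theta$ on $\mathcal N$ and there are $C_1>0$, $C_2>0$ and $d(W,\eta,\boldsymbol\kappa)$ such that for $\theta\in\mathcal N$, $\|\partial_\theta\psi(W,\theta,\eta,\boldsymbol\kappa)-\partial_\theta\psi(W,\theta_0,\eta,\boldsymbol\kappa)\|\le d(W,\eta,\boldsymbol\kappa)\|\theta-\theta_0\|^{C_1}$ and $E[d(W,\eta,\boldsymbol\kappa)]<C_2$; (iii) for each $s$ and $k$, $\int|\partial\psi_s(w,\theta_0,\hat\eta_\ell,\hat{\boldsymbol\kappa}_\ell)/\partial\theta_k-\partial\psi_s(w,\theta_0,\eta_0,\boldsymbol\kappa_0)/\partial\theta_k|F_0(dw)\to_p0$. Let $\bar\theta\to_p\theta_0$. Then $\partial\hat\psi(\bar\theta)/\partial\theta\to_p\Upsilon$.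
   Context: $W_i=(Y_i,V_i,Z_i)$, $i=1,\dots,n$, i.i.d. copies of $W=(Y,V,Z)\sim F_0$; $Z_1,\dots,Z_J$ are conditioning sub-vectors of $Z$; $\theta\in\Theta\subset\mathbb R^{d_\theta}$ with true value $\theta_0$; $\eta\in\Xi$ (functions of $V$, norm $\|\cdot\|_\Xi$) with true value $\eta_0$; residual functions $m_j(Y,\theta,\eta)$. $\boldsymbol\kappa_j(Z_j)\in\mathbb R^q$ are vectors of instrumental functions, $\boldsymbol\kappa(Z)$ the $q\times J$ matrix collecting them ($\boldsymbol\kappa_0$ the true one), and $\|\cdot\|_\infty$ the maximal absolute entry. $\psi(W,\theta,\eta,\boldsymbol\kappa)=\sum_{j=1}^Jm_j(Y,\theta,\eta)\boldsymbol\kappa_j(Z_j)$ with components $\psi_s$. The sample is split into folds $I_1,\dots,I_L$; $\hat\eta_\ell,\hat{\boldsymbol\kappa}_\ell$ are computed from observations outside $I_\ell$; $\hat\psi(\theta)=\frac1n\sum_{\ell=1}^L\sum_{i\in I_\ell}\psi(W_i,\theta,\hat\eta_\ell,\hat{\boldsymbol\kappa}_\ell)$. *)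

theory Defs
  imports "HOL-Analysis.Analysis" "HOL-Probability.Probability"
begin

text \<open>For measurable X n this is ordinary convergence in probability.\<close>
definition conv_prob :: "'a measure \<Rightarrow> (nat \<Rightarrow> 'a \<Rightarrow> 'b::metric_space) \<Rightarrow> 'b \<Rightarrow> bool" where
  "conv_prob M X c \<longleftrightarrow>
     (\<forall>\<epsilon>>0. \<forall>\<delta>>0. eventually (\<lambda>n. \<exists>A\<in>sets M.
        {\<omega>\<in>space M. dist (X n \<omega>) c > \<epsilon>} \<subseteq> A \<and> measure M A < \<delta>) sequentially)"

definition conv_prob_zero_enn :: "'a measure \<Rightarrow> (nat \<Rightarrow> 'a \<Rightarrow> ennreal) \<Rightarrow> bool" where
  "conv_prob_zero_enn M X \<longleftrightarrow>
     (\<forall>\<epsilon>>0. \<forall>\<delta>>0. eventually (\<lambda>n. \<exists>A\<in>sets M.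
        {\<omega>\<in>space M. X n \<omega> > ennreal \<epsilon>} \<subseteq> A \<and> measure M A < \<delta>) sequentially)"

text \<open>The instrument kappa_j is represented as a function of Z; that it
  only depends on the sub-vector Z_j is imposed by membership in kappa_class.\<close>
definition psi :: "('j::finite \<Rightarrow> 'y \<Rightarrow> 'v \<Rightarrow> real^'d \<Rightarrow> 'e \<Rightarrow> real)
     \<Rightarrow> 'y \<times> 'v \<times> 'z \<Rightarrow> real^'d \<Rightarrow> 'e \<Rightarrow> ('j \<Rightarrow> 'z \<Rightarrow> real^'q) \<Rightarrow> real^'q" where
  "psi m w \<theta> \<eta> \<kappa> = (\<Sum>j\<in>UNIV. m j (fst w) (fst (snd w)) \<theta> \<eta> *\<^sub>R \<kappa> j (snd (snd w)))"

definition kappa_class :: "('j \<Rightarrow> 'z \<Rightarrow> 'u) \<Rightarrow> ('j \<Rightarrow> 'z \<Rightarrow> real^'q) set" where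
  "kappa_class Zsub = {\<kappa>. \<forall>j z z'. Zsub j z = Zsub j z' \<longrightarrow> \<kappa> j z = \<kappa> j z'}"

definition sup_dist :: "('j::finite \<Rightarrow> 'z \<Rightarrow> real^'q) \<Rightarrow> ('j \<Rightarrow> 'z \<Rightarrow> real^'q) \<Rightarrow> 'z \<Rightarrow> real" where
  "sup_dist \<kappa> \<kappa>' z = Max (range (\<lambda>(j, s). \<bar>\<kappa> j z $ s - \<kappa>' j z $ s\<bar>))"

definition kappa_L2 :: "('y \<times> 'v \<times> 'z) measure \<Rightarrow> ('j::finite \<Rightarrow> 'z \<Rightarrow> real^'q) \<Rightarrow> ('j \<Rightarrow> 'z \<Rightarrow> real^'q) \<Rightarrow> ennreal" where
  "kappa_L2 F0 \<kappa> \<kappa>' = (\<integral>\<^sup>+ w. ennreal ((sup_dist \<kappa> \<kappa>' (snd (snd w)))\<^sup>2) \<partial>F0)"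

definition psi_hat :: "('j::finite \<Rightarrow> 'y \<Rightarrow> 'v \<Rightarrow> real^'d \<Rightarrow> 'e \<Rightarrow> real) \<Rightarrow> nat
     \<Rightarrow> (nat \<Rightarrow> nat set) \<Rightarrow> (nat \<Rightarrow> 'y \<times> 'v \<times> 'z) \<Rightarrow> (nat \<Rightarrow> 'e) \<Rightarrow> (nat \<Rightarrow> 'j \<Rightarrow> 'z \<Rightarrow> real^'q)
     \<Rightarrow> nat \<Rightarrow> real^'d \<Rightarrow> real^'q" where
  "psi_hat m L I Ws etas kappas n \<theta> =
     (1 / real n) *\<^sub>R (\<Sum>l<L. \<Sum>i\<in>I l. psi m (Ws i) \<theta> (etas l) (kappas l))"

end

theory Submission
  imports Defs
begin

(* Write the Jacobian of the cross-fitted moment at \<theta>bar as the average over folds l and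
   observations i in I_l of the Jacobians J(W_i, \<eta>hat_l, \<kappa>hat_l) at \<theta>bar, and split its
   distance to \<Upsilon> into three parts.  Moving \<theta>bar back to \<theta>0 costs at most
   |\<theta>bar - \<theta>0|^C1 times a cross-fitted average of d; replacing the estimated nuisances by
   (\<eta>0, \<kappa>0) at \<theta>0 costs a cross-fitted average of entrywise Jacobian errors; what remains
   is the plain sample mean of J(W_i, \<eta>0, \<kappa>0) at \<theta>0 minus its expectation \<Upsilon>.
   Because \<eta>hat_l and \<kappa>hat_l only depend on the observations outside fold l, an observation
   in fold l is independent of them, so the expectation of a cross-fitted average given the
   estimates is the F0-integral appearing in (ii) and (iii).  With Markov's inequality this
   keeps the average of d bounded in probability and sends the average of the errors to 0;
   condition (i) only guarantees that the estimates eventually lie where (ii) applies.  The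
   last part vanishes by the weak law of large numbers, proved by truncation and Hoeffding's
   inequality. *)

section \<open>Vanishing sequences of events and convergence in probability\<close>

definition prob_vanishing :: "'a measure \<Rightarrow> (nat \<Rightarrow> 'a set) \<Rightarrow> bool" where
  "prob_vanishing M E \<longleftrightarrow>
     (\<forall>\<delta>>0. eventually (\<lambda>n. \<exists>A\<in>sets M. E n \<inter> space M \<subseteq> A \<and> measure M A < \<delta>) sequentially)"

lemma conv_prob_iff_prob_vanishing:
  "conv_prob M X c \<longleftrightarrow> (\<forall>\<epsilon>>0. prob_vanishing M (\<lambda>n. {\<omega>\<in>space M. \<epsilon> < dist (X n \<omega>) c}))"
  unfolding conv_prob_def prob_vanishing_def by (simp add: Int_absorb2)

lemma conv_prob_zero_enn_iff_prob_vanishing: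
  "conv_prob_zero_enn M X \<longleftrightarrow> (\<forall>\<epsilon>>0. prob_vanishing M (\<lambda>n. {\<omega>\<in>space M. ennreal \<epsilon> < X n \<omega>}))"
  unfolding conv_prob_zero_enn_def prob_vanishing_def by (simp add: Int_absorb2)

lemma prob_vanishing_mono:
  assumes "prob_vanishing M E" and "eventually (\<lambda>n. E' n \<inter> space M \<subseteq> E n) sequentially"
  shows "prob_vanishing M E'"
  unfolding prob_vanishing_def
proof (intro allI impI)
  fix \<delta> :: real assume "\<delta> > 0"
  with assms(1) have "eventually (\<lambda>n. \<exists>A\<in>sets M. E n \<inter> space M \<subseteq> A \<and> measure M A < \<delta>) sequentially"
    unfolding prob_vanishing_def by blast
  with assms(2) show "eventually (\<lambda>n. \<exists>A\<in>sets M. E' n \<inter> space M \<subseteq> A \<and> measure M A < \<delta>) sequentially"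
    by eventually_elim blast
qed

lemma prob_vanishing_conv_prob_zero_enn_ge:
  assumes "conv_prob_zero_enn M X" "\<delta> > 0"
  shows "prob_vanishing M (\<lambda>n. {\<omega>\<in>space M. ennreal \<delta> \<le> X n \<omega>})"
proof -
  have "prob_vanishing M (\<lambda>n. {\<omega>\<in>space M. ennreal (\<delta> / 2) < X n \<omega>})"
    using assms unfolding conv_prob_zero_enn_iff_prob_vanishing by simp
  moreover have "ennreal (\<delta> / 2) < ennreal \<delta>"
    using assms(2) by (simp add: ennreal_less_iff)
  then have "{\<omega>\<in>space M. ennreal \<delta> \<le> X n \<omega>} \<inter> space M \<subseteq> {\<omega>\<in>space M. ennreal (\<delta> / 2) < X n \<omega>}" for n
    using less_le_trans by blast
  ultimately show ?thesis
    by (rule prob_vanishing_mono[OF _ always_eventually[OF allI]])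
qed

lemma prob_vanishing_approx:
  assumes "finite_measure M"
    and "\<And>\<delta>. \<delta> > 0 \<Longrightarrow> \<exists>F. prob_vanishing M F \<and>
           eventually (\<lambda>n. \<exists>A\<in>sets M. E n \<inter> space M \<subseteq> F n \<union> A \<and> measure M A \<le> \<delta>) sequentially"
  shows "prob_vanishing M E"
  unfolding prob_vanishing_def
proof (intro allI impI)
  fix \<delta> :: real assume "\<delta> > 0"
  then have "\<delta>/2 > 0" by simp
  then obtain F where "prob_vanishing M F"
    and approx: "eventually (\<lambda>n. \<exists>A\<in>sets M. E n \<inter> space M \<subseteq> F n \<union> A \<and> measure M A \<le> \<delta>/2) sequentially"
    using assms(2) by blast
  then have "eventually (\<lambda>n. \<exists>B\<in>sets M. F n \<inter> space M \<subseteq> B \<and> measure M B < \<delta>/2) sequentially"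
    using \<open>\<delta>/2 > 0\<close> unfolding prob_vanishing_def by blast
  with approx show "eventually (\<lambda>n. \<exists>A\<in>sets M. E n \<inter> space M \<subseteq> A \<and> measure M A < \<delta>) sequentially"
  proof eventually_elim
    case (elim n)
    then obtain A B where "A \<in> sets M" "B \<in> sets M" "E n \<inter> space M \<subseteq> F n \<union> A" "F n \<inter> space M \<subseteq> B"
      and "measure M A \<le> \<delta>/2" "measure M B < \<delta>/2" by blast
    moreover have "measure M (B \<union> A) \<le> measure M B + measure M A"
      using \<open>A \<in> sets M\<close> \<open>B \<in> sets M\<close> assms(1) by (intro measure_Un_le) auto
    ultimately show ?case by (intro bexI[of _ "B \<union> A"]) auto
  qed
qed

lemma prob_vanishing_Un:
  assumes "finite_measure M" "prob_vanishing M E" "prob_vanishing M F"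
  shows "prob_vanishing M (\<lambda>n. E n \<union> F n)"
  using assms(1)
proof (rule prob_vanishing_approx)
  fix \<delta> :: real assume "\<delta> > 0"
  with assms(3) have "eventually (\<lambda>n. \<exists>A\<in>sets M. F n \<inter> space M \<subseteq> A \<and> measure M A < \<delta>) sequentially"
    unfolding prob_vanishing_def by blast
  then have "eventually (\<lambda>n. \<exists>A\<in>sets M. (E n \<union> F n) \<inter> space M \<subseteq> E n \<union> A \<and> measure M A \<le> \<delta>) sequentially"
    by eventually_elim (use less_imp_le in blast)
  with assms(2) show "\<exists>F'. prob_vanishing M F' \<and> eventually (\<lambda>n. \<exists>A\<in>sets M.
      (E n \<union> F n) \<inter> space M \<subseteq> F' n \<union> A \<and> measure M A \<le> \<delta>) sequentially"
    by blast
qed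

lemma prob_vanishing_UN:
  assumes "finite_measure M" "finite K" "\<And>k. k \<in> K \<Longrightarrow> prob_vanishing M (E k)"
  shows "prob_vanishing M (\<lambda>n. \<Union>k\<in>K. E k n)"
  using assms(2,3)
proof (induction K rule: finite_induct)
  case empty
  show ?case unfolding prob_vanishing_def by (auto intro!: bexI[of _ "{}"])
next
  case (insert k K)
  then show ?case using prob_vanishing_Un[OF assms(1), of "E k" "\<lambda>n. \<Union>k\<in>K. E k n"] by simp
qed

lemma conv_prob_iff_dist_zero:
  "conv_prob M X c \<longleftrightarrow> conv_prob M (\<lambda>n \<omega>. dist (X n \<omega>) c) (0::real)"
  unfolding conv_prob_def by simp

lemma conv_prob_zero_add:
  fixes X Y :: "nat \<Rightarrow> 'a \<Rightarrow> real"
  assumes "finite_measure M" "conv_prob M X 0" "conv_prob M Y 0"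
  shows "conv_prob M (\<lambda>n \<omega>. X n \<omega> + Y n \<omega>) 0"
  unfolding conv_prob_iff_prob_vanishing
proof (intro allI impI)
  fix \<epsilon> :: real assume "\<epsilon> > 0"
  then have "\<epsilon>/2 > 0" by simp
  with assms have "prob_vanishing M (\<lambda>n. {\<omega>\<in>space M. \<epsilon>/2 < dist (X n \<omega>) 0} \<union> {\<omega>\<in>space M. \<epsilon>/2 < dist (Y n \<omega>) 0})"
    unfolding conv_prob_iff_prob_vanishing by (intro prob_vanishing_Un) blast+
  then show "prob_vanishing M (\<lambda>n. {\<omega>\<in>space M. \<epsilon> < dist (X n \<omega> + Y n \<omega>) 0})"
    by (rule prob_vanishing_mono) (auto intro!: always_eventually)
qed

lemma conv_prob_zero_sum:
  fixes X :: "'k \<Rightarrow> nat \<Rightarrow> 'a \<Rightarrow> real"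
  assumes "finite_measure M" "finite K" "\<And>k. k \<in> K \<Longrightarrow> conv_prob M (X k) 0"
  shows "conv_prob M (\<lambda>n \<omega>. \<Sum>k\<in>K. X k n \<omega>) 0"
  using assms(2,3)
proof (induction K rule: finite_induct)
  case empty
  show ?case by (auto simp: conv_prob_def intro!: bexI[of _ "{}"])
next
  case (insert k K)
  then show ?case by (simp add: conv_prob_zero_add[OF assms(1)])
qed

lemma conv_prob_dominated:
  fixes Y :: "nat \<Rightarrow> 'a \<Rightarrow> real"
  assumes "finite_measure M" "conv_prob M Y 0" "prob_vanishing M B"
    and "eventually (\<lambda>n. \<forall>\<omega>\<in>space M - B n. dist (X n \<omega>) c \<le> Y n \<omega>) sequentially"
  shows "conv_prob M X c"
  unfolding conv_prob_iff_prob_vanishing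
proof (intro allI impI)
  fix \<epsilon> :: real assume "\<epsilon> > 0"
  with assms have "prob_vanishing M (\<lambda>n. B n \<union> {\<omega>\<in>space M. \<epsilon> < dist (Y n \<omega>) 0})"
    by (intro prob_vanishing_Un) (auto simp: conv_prob_iff_prob_vanishing)
  then show "prob_vanishing M (\<lambda>n. {\<omega>\<in>space M. \<epsilon> < dist (X n \<omega>) c})"
  proof (rule prob_vanishing_mono)
    show "eventually (\<lambda>n. {\<omega>\<in>space M. \<epsilon> < dist (X n \<omega>) c} \<inter> space M
        \<subseteq> B n \<union> {\<omega>\<in>space M. \<epsilon> < dist (Y n \<omega>) 0}) sequentially"
      using assms(4) by eventually_elim force
  qed
qed

lemma conv_prob_dist_powr:
  assumes "conv_prob M X c" and p: "p > 0"
  shows "conv_prob M (\<lambda>n \<omega>. dist (X n \<omega>) c powr p) 0"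
  unfolding conv_prob_iff_prob_vanishing
proof (intro allI impI)
  fix \<epsilon> :: real assume \<epsilon>: "\<epsilon> > 0"
  have vanish: "prob_vanishing M (\<lambda>n. {\<omega>\<in>space M. \<epsilon> powr (1 / p) < dist (X n \<omega>) c})"
    using assms(1) \<epsilon> unfolding conv_prob_iff_prob_vanishing by simp
  have "\<epsilon> powr (1 / p) < dist (X n \<omega>) c" if "\<epsilon> < dist (X n \<omega>) c powr p" for n \<omega>
  proof -
    have "\<epsilon> powr (1 / p) < (dist (X n \<omega>) c powr p) powr (1 / p)"
      using that p \<epsilon> by (intro powr_less_mono2) auto
    then show ?thesis using p by (simp add: powr_powr)
  qed
  then have "{\<omega>\<in>space M. \<epsilon> < dist (dist (X n \<omega>) c powr p) 0} \<inter> space M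
      \<subseteq> {\<omega>\<in>space M. \<epsilon> powr (1 / p) < dist (X n \<omega>) c}" for n
    by auto
  then show "prob_vanishing M (\<lambda>n. {\<omega>\<in>space M. \<epsilon> < dist (dist (X n \<omega>) c powr p) 0})"
    by (intro prob_vanishing_mono[OF vanish] always_eventually allI)
qed

section \<open>Independence, Markov's inequality and the weak law of large numbers\<close>

lemma borel_measurable_nn_integral_left:
  fixes h :: "'w \<Rightarrow> 'x \<Rightarrow> ennreal"
  assumes "sigma_finite_measure F" "case_prod h \<in> borel_measurable (F \<Otimes>\<^sub>M X)"
  shows "(\<lambda>x. \<integral>\<^sup>+w. h w x \<partial>F) \<in> borel_measurable X"
proof -
  have "(\<lambda>(x, w). h w x) \<in> borel_measurable (X \<Otimes>\<^sub>M F)"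
    using measurable_comp[OF measurable_pair_swap' assms(2)] by (simp add: comp_def case_prod_beta')
  then show ?thesis
    by (rule sigma_finite_measure.borel_measurable_nn_integral[OF assms(1)])
qed

lemma nn_integral_indep_component:
  fixes W :: "nat \<Rightarrow> 'a \<Rightarrow> 'w" and h :: "'w \<Rightarrow> 'x \<Rightarrow> ennreal"
  assumes M: "prob_space M" and F0: "prob_space F0"
    and indep: "prob_space.indep_vars M (\<lambda>_. F0) W UNIV" and ident_distr: "\<And>i. distr M F0 (W i) = F0"
    and S: "finite S" "i \<notin> S"
    and g: "g \<in> measurable (PiM S (\<lambda>_. F0)) X"
    and h: "case_prod h \<in> borel_measurable (F0 \<Otimes>\<^sub>M X)"
  shows "(\<integral>\<^sup>+\<omega>. h (W i \<omega>) (g (\<lambda>j\<in>S. W j \<omega>)) \<partial>M)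
       = (\<integral>\<^sup>+\<omega>. (\<integral>\<^sup>+w. h w (g (\<lambda>j\<in>S. W j \<omega>)) \<partial>F0) \<partial>M)"
proof -
  interpret M: prob_space M by (rule M)
  interpret F0: prob_space F0 by (rule F0)
  interpret P: product_prob_space "\<lambda>_::nat. F0" by (rule product_prob_spaceI) (rule F0)
  \<comment> \<open>The joint law of the \<open>W j\<close>, \<open>j \<in> insert i S\<close>, is a product measure, so the
    coordinate \<open>i\<close> can be integrated out first.\<close>
  define T where "T = insert i S"
  have W_meas: "\<And>j. W j \<in> measurable M F0"
    using indep unfolding M.indep_vars_def2 by blast
  have distr_T: "distr M (PiM T (\<lambda>_. F0)) (\<lambda>\<omega>. \<lambda>j\<in>T. W j \<omega>) = PiM T (\<lambda>_. F0)"
    using M.indep_vars_iff_distr_eq_PiM[where I=T and X=W and M'="\<lambda>_. F0"] M.indep_vars_subset[OF indep]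
    by (simp add: T_def W_meas ident_distr)
  have W_T_meas: "(\<lambda>\<omega>. \<lambda>j\<in>T. W j \<omega>) \<in> measurable M (PiM T (\<lambda>_. F0))"
    by (intro measurable_restrict W_meas)
  have split_T: "(\<integral>\<^sup>+\<omega>. \<Phi> (\<lambda>j\<in>T. W j \<omega>) \<partial>M)
      = (\<integral>\<^sup>+x. \<integral>\<^sup>+y. \<Phi> (x(i := y)) \<partial>F0 \<partial>PiM S (\<lambda>_. F0))"
    if \<Phi>: "\<Phi> \<in> borel_measurable (PiM T (\<lambda>_. F0))" for \<Phi>
  proof -
    have "(\<integral>\<^sup>+\<omega>. \<Phi> (\<lambda>j\<in>T. W j \<omega>) \<partial>M) = (\<integral>\<^sup>+x. \<Phi> x \<partial>PiM T (\<lambda>_. F0))"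
      using nn_integral_distr[OF W_T_meas, of \<Phi>, unfolded distr_T, OF \<Phi>] by (rule sym)
    also have "\<dots> = (\<integral>\<^sup>+x. \<integral>\<^sup>+y. \<Phi> (x(i := y)) \<partial>F0 \<partial>PiM S (\<lambda>_. F0))"
      using \<Phi> unfolding T_def by (rule P.product_nn_integral_insert[OF S])
    finally show ?thesis .
  qed
  have restrict_upd: "restrict (x(i := y)) S = x" if "x \<in> space (PiM S (\<lambda>_. F0))" for x y
    using that S(2) by (auto simp: space_PiM PiE_def extensional_def fun_eq_iff)
  have restrict_T: "restrict (\<lambda>j\<in>T. W j \<omega>) S = (\<lambda>j\<in>S. W j \<omega>)" for \<omega>
    by (auto simp: T_def fun_eq_iff)
  have g_T: "(\<lambda>x. g (restrict x S)) \<in> measurable (PiM T (\<lambda>_. F0)) X"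
    using measurable_comp[OF measurable_restrict_subset g, of T] by (auto simp: T_def comp_def)
  define q where "q x = (\<integral>\<^sup>+w. h w x \<partial>F0)" for x
  have q: "q \<in> borel_measurable X"
    unfolding q_def by (rule borel_measurable_nn_integral_left[OF F0.sigma_finite_measure_axioms h])
  have W_T: "(\<lambda>j\<in>T. W j \<omega>) i = W i \<omega>" for \<omega>
    by (simp add: T_def)
  have hT: "(\<lambda>x. h (x i) (g (restrict x S))) \<in> borel_measurable (PiM T (\<lambda>_. F0))"
    using measurable_comp[OF measurable_Pair[OF measurable_component_singleton g_T] h]
    by (simp add: T_def comp_def)
  have "(\<integral>\<^sup>+\<omega>. h (W i \<omega>) (g (\<lambda>j\<in>S. W j \<omega>)) \<partial>M)
      = (\<integral>\<^sup>+x. \<integral>\<^sup>+y. h ((x(i := y)) i) (g (restrict (x(i := y)) S)) \<partial>F0 \<partial>PiM S (\<lambda>_. F0))"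
    using split_T[OF hT] by (simp only: W_T restrict_T)
  also have "\<dots> = (\<integral>\<^sup>+x. q (g x) \<partial>PiM S (\<lambda>_. F0))"
    by (intro nn_integral_cong) (simp add: restrict_upd q_def)
  also have "\<dots> = (\<integral>\<^sup>+x. \<integral>\<^sup>+y. q (g (restrict (x(i := y)) S)) \<partial>F0 \<partial>PiM S (\<lambda>_. F0))"
    by (intro nn_integral_cong) (simp add: restrict_upd F0.emeasure_space_1)
  also have "\<dots> = (\<integral>\<^sup>+\<omega>. q (g (\<lambda>j\<in>S. W j \<omega>)) \<partial>M)"
    using split_T[OF measurable_comp[OF g_T q, unfolded comp_def], symmetric] by (simp only: restrict_T)
  finally show ?thesis unfolding q_def .
qed

lemma nn_integral_Markov_inequality_measure:
  assumes "finite_measure M" "U \<in> borel_measurable M" "c > 0" "B \<ge> 0"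
    and "(\<integral>\<^sup>+x. U x \<partial>M) \<le> ennreal B"
  shows "measure M {x\<in>space M. ennreal c \<le> U x} \<le> B / c"
proof -
  let ?S = "{x\<in>space M. ennreal c \<le> U x}"
  have "?S \<in> sets M" using assms(2) by measurable
  then have "ennreal c * emeasure M ?S = (\<integral>\<^sup>+x. ennreal c * indicator ?S x \<partial>M)"
    by (simp add: nn_integral_cmult_indicator)
  also have "\<dots> \<le> (\<integral>\<^sup>+x. U x \<partial>M)"
    by (intro nn_integral_mono) (auto simp: indicator_def)
  also have "\<dots> \<le> ennreal B" by fact
  finally have "ennreal (c * measure M ?S) \<le> ennreal B"
    using assms(1,3) by (simp add: finite_measure.emeasure_eq_measure ennreal_mult)
  then have "c * measure M ?S \<le> B"
    using assms(4) by simp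
  then show ?thesis
    using assms(3) by (simp add: pos_le_divide_eq mult.commute)
qed

lemma integrable_split_bounded_small:
  fixes f :: "'w \<Rightarrow> real"
  assumes f: "integrable F f" and \<tau>: "\<tau> > 0"
  obtains u v t where "\<And>w. f w = u w + v w" "u \<in> borel_measurable F" "\<And>w. \<bar>u w\<bar> \<le> t" "t > 0"
    "integrable F v" "(\<integral>w. \<bar>v w\<bar> \<partial>F) < \<tau>"
proof -
  have f_meas[measurable]: "f \<in> borel_measurable F" using f by auto
  have "(\<lambda>k::nat. \<integral>w. \<bar>f w\<bar> * indicator {w. real k < \<bar>f w\<bar>} w \<partial>F) \<longlonglongrightarrow> (\<integral>w. 0 \<partial>F)"
  proof (rule integral_dominated_convergence[where w="\<lambda>w. \<bar>f w\<bar>"])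
    show "AE w in F. (\<lambda>k. \<bar>f w\<bar> * indicator {w. real k < \<bar>f w\<bar>} w) \<longlonglongrightarrow> 0"
    proof (rule AE_I2)
      fix w
      obtain k0 :: nat where "\<bar>f w\<bar> < real k0" using reals_Archimedean2 by blast
      then have "eventually (\<lambda>k. \<bar>f w\<bar> * indicator {w. real k < \<bar>f w\<bar>} w = 0) sequentially"
        unfolding eventually_sequentially by (intro exI[of _ k0]) (auto simp: indicator_def)
      then show "(\<lambda>k. \<bar>f w\<bar> * indicator {w. real k < \<bar>f w\<bar>} w) \<longlonglongrightarrow> 0"
        by (rule tendsto_eventually)
    qed
  qed (use f in \<open>auto simp: indicator_def\<close>)
  then have "eventually (\<lambda>k. (\<integral>w. \<bar>f w\<bar> * indicator {w. real k < \<bar>f w\<bar>} w \<partial>F) < \<tau>) sequentially"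
    using \<tau> by (simp add: order_tendstoD(2))
  then obtain k :: nat where tail: "(\<integral>w. \<bar>f w\<bar> * indicator {w. real k < \<bar>f w\<bar>} w \<partial>F) < \<tau>"
    by (meson eventually_sequentially order_refl)
  define u where "u w = (if \<bar>f w\<bar> \<le> real k then f w else 0)" for w
  define v where "v w = (if \<bar>f w\<bar> \<le> real k then 0 else f w)" for w
  have "u \<in> borel_measurable F" unfolding u_def by measurable
  moreover have "v \<in> borel_measurable F" unfolding v_def by measurable
  then have "integrable F v"
    by (rule Bochner_Integration.integrable_bound[OF f]) (auto simp: v_def)
  moreover have "(\<integral>w. \<bar>v w\<bar> \<partial>F) = (\<integral>w. \<bar>f w\<bar> * indicator {w. real k < \<bar>f w\<bar>} w \<partial>F)"
    by (intro Bochner_Integration.integral_cong) (auto simp: v_def indicator_def)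
  ultimately show ?thesis
    using tail by (intro that[of u v "real k + 1"]) (auto simp: u_def v_def)
qed

lemma
  fixes g :: "'w \<Rightarrow> real" and W :: "nat \<Rightarrow> 'a \<Rightarrow> 'w"
  assumes W: "\<And>i. W i \<in> measurable M F" "\<And>i. distr M F (W i) = F" and g: "integrable F g"
  shows integrable_sample_mean: "integrable M (\<lambda>\<omega>. (\<Sum>i<n. g (W i \<omega>)) / real n)"
    and integral_sample_mean: "n > 0 \<Longrightarrow> (\<integral>\<omega>. (\<Sum>i<n. g (W i \<omega>)) / real n \<partial>M) = (\<integral>w. g w \<partial>F)"
proof -
  have g_meas: "g \<in> borel_measurable F" using g by auto
  have int: "integrable M (\<lambda>\<omega>. g (W i \<omega>))" for i
    using integrable_distr_eq[OF W(1) g_meas] g by (simp add: W(2))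
  then show "integrable M (\<lambda>\<omega>. (\<Sum>i<n. g (W i \<omega>)) / real n)" by simp
  assume "n > 0"
  have "(\<integral>\<omega>. g (W i \<omega>) \<partial>M) = (\<integral>w. g w \<partial>F)" for i
    using integral_distr[OF W(1) g_meas] by (simp add: W(2))
  with int \<open>n > 0\<close> show "(\<integral>\<omega>. (\<Sum>i<n. g (W i \<omega>)) / real n \<partial>M) = (\<integral>w. g w \<partial>F)"
    by (simp add: Bochner_Integration.integral_sum)
qed

lemma measure_sample_mean_ge:
  fixes g :: "'w \<Rightarrow> real" and W :: "nat \<Rightarrow> 'a \<Rightarrow> 'w"
  assumes W: "\<And>i. W i \<in> measurable M F" "\<And>i. distr M F (W i) = F"
    and g: "integrable F g" "\<And>w. 0 \<le> g w" and n: "n > 0" and c: "c > 0"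
  shows "measure M {\<omega>\<in>space M. c \<le> (\<Sum>i<n. g (W i \<omega>)) / real n} \<le> (\<integral>w. g w \<partial>F) / c"
proof -
  have "measure M {\<omega>\<in>space M. c \<le> (\<Sum>i<n. g (W i \<omega>)) / real n}
      \<le> (\<integral>\<omega>. (\<Sum>i<n. g (W i \<omega>)) / real n \<partial>M) / c"
    by (rule integral_Markov_inequality_measure[OF integrable_sample_mean[where W=W, OF W g(1)]])
       (use g(2) c in \<open>auto intro!: sum_nonneg divide_nonneg_nonneg\<close>)
  also have "(\<integral>\<omega>. (\<Sum>i<n. g (W i \<omega>)) / real n \<partial>M) = (\<integral>w. g w \<partial>F)"
    by (rule integral_sample_mean[where W=W, OF W g(1) n])
  finally show ?thesis .
qed

lemma conv_prob_sample_mean_bounded: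
  fixes u :: "'w \<Rightarrow> real" and W :: "nat \<Rightarrow> 'a \<Rightarrow> 'w"
  assumes M: "prob_space M" and F: "prob_space F"
    and indep: "prob_space.indep_vars M (\<lambda>_. F) W UNIV" and ident_distr: "\<And>i. distr M F (W i) = F"
    and u: "u \<in> borel_measurable F" and bound: "\<And>w. \<bar>u w\<bar> \<le> t" and t: "t > 0"
  shows "conv_prob M (\<lambda>n \<omega>. (\<Sum>i<n. u (W i \<omega>)) / real n) (\<integral>w. u w \<partial>F)"
  unfolding conv_prob_iff_prob_vanishing prob_vanishing_def
proof (intro allI impI)
  fix \<epsilon> \<delta> :: real assume \<epsilon>: "\<epsilon> > 0" and \<delta>: "\<delta> > 0"
  interpret M: prob_space M by (rule M)
  have W_meas[measurable]: "W i \<in> measurable M F" for i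
    using indep unfolding M.indep_vars_def2 by blast
  note u[measurable]
  have bound': "u w \<in> {- t..t}" for w
    using bound[of w] by (simp add: abs_le_iff)
  define c where "c = 2 * \<epsilon>\<^sup>2 / (t - - t)\<^sup>2"
  have "exp (- c) < 1" using \<epsilon> t by (simp add: c_def)
  then have "(\<lambda>n. 2 * exp (- c) ^ n) \<longlonglongrightarrow> 0"
    by (intro tendsto_mult_right_zero LIMSEQ_power_zero) simp
  then have "eventually (\<lambda>n. 2 * exp (- c) ^ n < \<delta> \<and> n > 0) sequentially"
    using \<delta> by (intro eventually_conj order_tendstoD(2) eventually_gt_at_top) auto
  then show "eventually (\<lambda>n. \<exists>A\<in>sets M. {\<omega>\<in>space M. \<epsilon> < dist ((\<Sum>i<n. u (W i \<omega>)) / real n) (\<integral>w. u w \<partial>F)}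
      \<inter> space M \<subseteq> A \<and> measure M A < \<delta>) sequentially"
  proof eventually_elim
    case (elim n)
    interpret H: Hoeffding_ineq_iid M "{..<n}" "\<lambda>i \<omega>. u (W i \<omega>)" "\<lambda>\<omega>. u (W 0 \<omega>)" "- t" t
      "\<integral>\<omega>. u (W 0 \<omega>) \<partial>M"
    proof unfold_locales
      show "M.indep_vars (\<lambda>_. borel) (\<lambda>i \<omega>. u (W i \<omega>)) {..<n}"
        by (rule M.indep_vars_compose2[OF M.indep_vars_subset[OF indep]]) auto
      show "distr M borel (\<lambda>\<omega>. u (W i \<omega>)) = distr M borel (\<lambda>\<omega>. u (W 0 \<omega>))" for i
        using distr_distr[OF u W_meas[of i]] distr_distr[OF u W_meas[of 0]] by (simp add: comp_def ident_distr)
      show "AE x in M. u (W 0 x) \<in> {- t..t}" using bound' by simp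
    qed simp_all
    define A where "A = {\<omega>\<in>space M. \<epsilon> \<le> \<bar>(\<Sum>i<n. u (W i \<omega>)) / real n - (\<integral>\<omega>. u (W 0 \<omega>) \<partial>M)\<bar>}"
    have "measure M A \<le> 2 * exp (- 2 * real n * \<epsilon>\<^sup>2 / (t - - t)\<^sup>2)"
      unfolding A_def by (rule H.Hoeffding_ineq_abs_ge'[simplified card_lessThan]) (use \<epsilon> t elim in auto)
    also have "\<dots> = 2 * exp (- c) ^ n"
      by (simp add: c_def exp_of_nat_mult[symmetric] mult_ac)
    finally have "measure M A < \<delta>" using elim by simp
    moreover have "A \<in> sets M"
      unfolding A_def by measurable
    moreover have "(\<integral>\<omega>. u (W 0 \<omega>) \<partial>M) = (\<integral>w. u w \<partial>F)"
      using integral_distr[OF W_meas u] by (simp add: ident_distr)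
    then have "{\<omega>\<in>space M. \<epsilon> < dist ((\<Sum>i<n. u (W i \<omega>)) / real n) (\<integral>w. u w \<partial>F)} \<inter> space M \<subseteq> A"
      by (auto simp: A_def dist_real_def)
    ultimately show ?case by blast
  qed
qed

theorem weak_law_of_large_numbers:
  fixes f :: "'w \<Rightarrow> real" and W :: "nat \<Rightarrow> 'a \<Rightarrow> 'w"
  assumes M: "prob_space M" and F: "prob_space F"
    and indep: "prob_space.indep_vars M (\<lambda>_. F) W UNIV" and ident_distr: "\<And>i. distr M F (W i) = F"
    and f: "integrable F f"
  shows "conv_prob M (\<lambda>n \<omega>. (\<Sum>i<n. f (W i \<omega>)) / real n) (\<integral>w. f w \<partial>F)"
  unfolding conv_prob_iff_prob_vanishing
proof (intro allI impI)
  fix \<epsilon> :: real assume \<epsilon>: "\<epsilon> > 0"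
  interpret M: prob_space M by (rule M)
  have W_meas[measurable]: "W i \<in> measurable M F" for i
    using indep unfolding M.indep_vars_def2 by blast
  show "prob_vanishing M (\<lambda>n. {\<omega>\<in>space M. \<epsilon> < dist ((\<Sum>i<n. f (W i \<omega>)) / real n) (\<integral>w. f w \<partial>F)})"
  proof (rule prob_vanishing_approx[OF M.finite_measure_axioms])
    fix \<delta> :: real assume \<delta>: "\<delta> > 0"
    define \<tau> where "\<tau> = \<epsilon> * min \<delta> 1 / 8"
    have \<tau>: "\<tau> > 0" "4 * \<tau> \<le> \<epsilon> * \<delta>" "8 * \<tau> \<le> \<epsilon>"
      using \<epsilon> \<delta> by (auto simp: \<tau>_def min_def)
    obtain u v t where f_split: "\<And>w. f w = u w + v w" and u: "u \<in> borel_measurable F" "\<And>w. \<bar>u w\<bar> \<le> t" "t > 0"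
      and v: "integrable F v" and E_abs_v: "(\<integral>w. \<bar>v w\<bar> \<partial>F) < \<tau>"
      using integrable_split_bounded_small[OF f \<tau>(1)] by blast
    have v_meas[measurable]: "v \<in> borel_measurable F" using v by auto
    have int_u: "integrable F u"
      using Bochner_Integration.integrable_diff[OF f v] by (simp add: f_split)
    have E_f: "(\<integral>w. f w \<partial>F) = (\<integral>w. u w \<partial>F) + (\<integral>w. v w \<partial>F)"
      using Bochner_Integration.integral_add[OF int_u v] by (simp only: f_split[symmetric])
    define Bad where "Bad n = {\<omega>\<in>space M. \<epsilon>/2 < dist ((\<Sum>i<n. u (W i \<omega>)) / real n) (\<integral>w. u w \<partial>F)}" for n
    have "conv_prob M (\<lambda>n \<omega>. (\<Sum>i<n. u (W i \<omega>)) / real n) (\<integral>w. u w \<partial>F)"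
      by (rule conv_prob_sample_mean_bounded[OF M F indep ident_distr u])
    then have "prob_vanishing M Bad"
      using \<epsilon> unfolding Bad_def conv_prob_iff_prob_vanishing by (meson half_gt_zero)
    moreover have "eventually (\<lambda>n. \<exists>A\<in>sets M. {\<omega>\<in>space M. \<epsilon> < dist ((\<Sum>i<n. f (W i \<omega>)) / real n)
        (\<integral>w. f w \<partial>F)} \<inter> space M \<subseteq> Bad n \<union> A \<and> measure M A \<le> \<delta>) sequentially"
      using eventually_gt_at_top[of 0]
    proof eventually_elim
      case (elim n)
      define A where "A = {\<omega>\<in>space M. \<epsilon>/4 \<le> (\<Sum>i<n. \<bar>v (W i \<omega>)\<bar>) / real n}"
      have "measure M A \<le> (\<integral>w. \<bar>v w\<bar> \<partial>F) / (\<epsilon>/4)"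
        unfolding A_def using v elim \<epsilon> by (intro measure_sample_mean_ge[OF W_meas ident_distr]) auto
      also have "\<dots> \<le> \<delta>"
        using E_abs_v \<tau> \<epsilon> by (simp add: field_simps)
      finally have "measure M A \<le> \<delta>" .
      moreover have "A \<in> sets M"
        unfolding A_def by measurable
      moreover have "{\<omega>\<in>space M. \<epsilon> < dist ((\<Sum>i<n. f (W i \<omega>)) / real n) (\<integral>w. f w \<partial>F)} \<inter> space M
          \<subseteq> Bad n \<union> A"
      proof (intro subsetI)
        fix \<omega> assume \<omega>: "\<omega> \<in> {\<omega>\<in>space M. \<epsilon> < dist ((\<Sum>i<n. f (W i \<omega>)) / real n) (\<integral>w. f w \<partial>F)} \<inter> space M"
        have "(\<Sum>i<n. f (W i \<omega>)) / real n - (\<integral>w. f w \<partial>F)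
            = ((\<Sum>i<n. u (W i \<omega>)) / real n - (\<integral>w. u w \<partial>F)) + (\<Sum>i<n. v (W i \<omega>)) / real n - (\<integral>w. v w \<partial>F)"
        proof -
          have "(\<Sum>i<n. f (W i \<omega>)) = (\<Sum>i<n. u (W i \<omega>)) + (\<Sum>i<n. v (W i \<omega>))"
            by (simp add: f_split sum.distrib)
          then show ?thesis by (simp add: E_f add_divide_distrib)
        qed
        moreover have "\<bar>(\<Sum>i<n. v (W i \<omega>)) / real n\<bar> \<le> (\<Sum>i<n. \<bar>v (W i \<omega>)\<bar>) / real n"
          by (simp add: divide_right_mono)
        moreover have "\<bar>\<integral>w. v w \<partial>F\<bar> < \<epsilon>/8"
          using integral_abs_bound[of F v] E_abs_v \<tau>(3) by linarith
        moreover have "\<epsilon> < \<bar>(\<Sum>i<n. f (W i \<omega>)) / real n - (\<integral>w. f w \<partial>F)\<bar>"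
          using \<omega> by (simp add: dist_real_def)
        ultimately have "\<epsilon>/2 < \<bar>(\<Sum>i<n. u (W i \<omega>)) / real n - (\<integral>w. u w \<partial>F)\<bar>
            \<or> \<epsilon>/4 \<le> (\<Sum>i<n. \<bar>v (W i \<omega>)\<bar>) / real n"
          by arith
        then show "\<omega> \<in> Bad n \<union> A"
          using \<omega> by (auto simp: Bad_def A_def dist_real_def)
      qed
      ultimately show ?case by blast
    qed
    ultimately show "\<exists>Bad. prob_vanishing M Bad \<and> eventually (\<lambda>n. \<exists>A\<in>sets M.
        {\<omega>\<in>space M. \<epsilon> < dist ((\<Sum>i<n. f (W i \<omega>)) / real n) (\<integral>w. f w \<partial>F)} \<inter> space M
          \<subseteq> Bad n \<union> A \<and> measure M A \<le> \<delta>) sequentially"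
      by blast
  qed
qed

section \<open>Jacobians of finite sums\<close>

lemma jacobian_eqI:
  fixes f :: "real^'n \<Rightarrow> real^'m"
  assumes "(f has_derivative (\<lambda>h. A *v h)) (at x)"
  shows "jacobian f (at x) = A"
  unfolding jacobian_def frechet_derivative_at[OF assms, symmetric]
  by (rule matrix_of_matrix_vector_mul)

lemma matrix_vector_mult_sum_left:
  fixes J :: "'i \<Rightarrow> real^'n^'m"
  shows "(\<Sum>i\<in>S. J i) *v h = (\<Sum>i\<in>S. J i *v h)"
  by (simp add: vec_eq_iff matrix_vector_mult_def sum_distrib_right sum.swap[of _ S])

lemma has_derivative_sum_matrix:
  fixes f :: "'i \<Rightarrow> real^'n \<Rightarrow> real^'m" and J :: "'i \<Rightarrow> real^'n^'m"
  assumes "\<And>i. i \<in> S \<Longrightarrow> (f i has_derivative (\<lambda>h. J i *v h)) (at x)"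
  shows "((\<lambda>t. \<Sum>i\<in>S. f i t) has_derivative (\<lambda>h. (\<Sum>i\<in>S. J i) *v h)) (at x)"
  unfolding matrix_vector_mult_sum_left by (rule has_derivative_sum) (rule assms)

lemma has_derivative_scaleR_matrix:
  fixes A :: "real^'n^'m"
  assumes "(f has_derivative (\<lambda>h. A *v h)) (at x)"
  shows "((\<lambda>t. c *\<^sub>R f t) has_derivative (\<lambda>h. (c *\<^sub>R A) *v h)) (at x)"
  unfolding scaleR_matrix_vector_assoc[symmetric] by (rule has_derivative_scaleR_right[OF assms])

lemma norm_le_sum_abs_entries:
  fixes A :: "real^'n^'m"
  shows "norm A \<le> (\<Sum>s\<in>UNIV. \<Sum>k\<in>UNIV. \<bar>A $ s $ k\<bar>)"
proof -
  have "norm A = L2_set (\<lambda>s. norm (A $ s)) UNIV" by (simp add: norm_vec_def)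
  also have "\<dots> \<le> (\<Sum>s\<in>UNIV. norm (A $ s))" by (rule L2_set_le_sum) simp
  also have "\<dots> \<le> (\<Sum>s\<in>UNIV. \<Sum>k\<in>UNIV. \<bar>A $ s $ k\<bar>)"
    by (intro sum_mono norm_le_l1_cart)
  finally show ?thesis .
qed

lemma bounded_linear_matrix_entry: "bounded_linear (\<lambda>A :: real^'n^'m. A $ s $ k)"
  by (rule bounded_linear_compose[OF bounded_linear_vec_nth bounded_linear_vec_nth])

lemma borel_measurable_matrix_entry[measurable (raw)]:
  fixes g :: "'a \<Rightarrow> real^'n^'m"
  assumes "g \<in> borel_measurable M"
  shows "(\<lambda>x. g x $ s $ k) \<in> borel_measurable M"
  using measurable_compose[OF assms borel_measurable_continuous_onI[OF
        linear_continuous_on[OF bounded_linear_matrix_entry]]] .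

section \<open>Cross-fitted averages\<close>

lemma ex_measurable_factor_Pair:
  assumes "\<exists>g\<in>measurable P A. \<forall>\<omega>\<in>S. a \<omega> = g (r \<omega>)" and "\<exists>g\<in>measurable P B. \<forall>\<omega>\<in>S. b \<omega> = g (r \<omega>)"
  shows "\<exists>g\<in>measurable P (A \<Otimes>\<^sub>M B). \<forall>\<omega>\<in>S. (a \<omega>, b \<omega>) = g (r \<omega>)"
proof -
  obtain ga gb where "ga \<in> measurable P A" "gb \<in> measurable P B"
    and "\<forall>\<omega>\<in>S. a \<omega> = ga (r \<omega>)" "\<forall>\<omega>\<in>S. b \<omega> = gb (r \<omega>)"
    using assms by blast
  then show ?thesis
    by (intro bexI[of _ "\<lambda>y. (ga y, gb y)"] measurable_Pair) auto
qed

locale cross_fitting =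
  fixes M :: "'a measure" and F0 :: "'w measure" and W :: "nat \<Rightarrow> 'a \<Rightarrow> 'w"
    and X :: "'x measure" and xhat :: "nat \<Rightarrow> nat \<Rightarrow> 'a \<Rightarrow> 'x"
    and L :: nat and I :: "nat \<Rightarrow> nat \<Rightarrow> nat set"
  assumes prob_space_M: "prob_space M" and prob_space_F0: "prob_space F0"
    and indep: "prob_space.indep_vars M (\<lambda>_. F0) W UNIV"
    and identically_distributed: "\<And>i. distr M F0 (W i) = F0"
    and folds_cover: "\<And>n. (\<Union>l<L. I n l) = {..<n}"
    and folds_disjoint: "\<And>n. disjoint_family_on (I n) {..<L}"
    and xhat_outside_fold: "\<And>n l. l < L \<Longrightarrow> \<exists>g\<in>measurable (PiM ({..<n} - I n l) (\<lambda>_. F0)) X.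
           \<forall>\<omega>\<in>space M. xhat n l \<omega> = g (\<lambda>i\<in>{..<n} - I n l. W i \<omega>)"
begin

lemma finite_measure_M: "finite_measure M"
  using prob_space_M by (rule prob_space.finite_measure)

lemma W_measurable: "W i \<in> measurable M F0"
  using indep unfolding prob_space.indep_vars_def2[OF prob_space_M] by blast

lemma xhat_measurable:
  assumes "l < L" shows "xhat n l \<in> measurable M X"
proof -
  obtain g where g: "g \<in> measurable (PiM ({..<n} - I n l) (\<lambda>_. F0)) X"
    and xhat: "\<forall>\<omega>\<in>space M. xhat n l \<omega> = g (\<lambda>i\<in>{..<n} - I n l. W i \<omega>)"
    using xhat_outside_fold[OF assms] by blast
  have "(\<lambda>\<omega>. g (\<lambda>i\<in>{..<n} - I n l. W i \<omega>)) \<in> measurable M X"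
    using measurable_comp[OF measurable_restrict[OF W_measurable] g] by (simp add: comp_def)
  with xhat show ?thesis by (subst measurable_cong) auto
qed

lemma sum_folds: "(\<Sum>l<L. \<Sum>i\<in>I n l. a i) = (\<Sum>i<n. a i)"
proof -
  have "finite (I n l)" if "l < L" for l
    using folds_cover[of n] that by (metis UN_I finite_lessThan finite_subset lessThan_iff subsetI)
  then show ?thesis
    using sum.UNION_disjoint_family[of "{..<L}" "I n" a] folds_disjoint[of n]
    by (simp add: folds_cover)
qed

lemma nn_integral_cross_fit_sum_le:
  fixes h :: "'w \<Rightarrow> 'x \<Rightarrow> ennreal"
  assumes h: "case_prod h \<in> borel_measurable (F0 \<Otimes>\<^sub>M X)"
    and bound: "\<And>x. x \<in> space X \<Longrightarrow> (\<integral>\<^sup>+w. h w x \<partial>F0) \<le> B"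
  shows "(\<integral>\<^sup>+\<omega>. (\<Sum>l<L. \<Sum>i\<in>I n l. h (W i \<omega>) (xhat n l \<omega>)) \<partial>M) \<le> of_nat n * B"
proof -
  interpret M: prob_space M by (rule prob_space_M)
  have meas: "(\<lambda>\<omega>. h (W i \<omega>) (xhat n l \<omega>)) \<in> borel_measurable M" if "l < L" for l i
    using measurable_comp[OF measurable_Pair[OF W_measurable xhat_measurable[OF that]] h]
    by (simp add: comp_def)
  have term_le: "(\<integral>\<^sup>+\<omega>. h (W i \<omega>) (xhat n l \<omega>) \<partial>M) \<le> B" if l: "l < L" and i: "i \<in> I n l" for l i
  proof -
    obtain g where g: "g \<in> measurable (PiM ({..<n} - I n l) (\<lambda>_. F0)) X"
      and xhat: "\<forall>\<omega>\<in>space M. xhat n l \<omega> = g (\<lambda>j\<in>{..<n} - I n l. W j \<omega>)"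
      using xhat_outside_fold[OF l] by blast
    have "(\<integral>\<^sup>+\<omega>. h (W i \<omega>) (xhat n l \<omega>) \<partial>M)
        = (\<integral>\<^sup>+\<omega>. h (W i \<omega>) (g (\<lambda>j\<in>{..<n} - I n l. W j \<omega>)) \<partial>M)"
      using xhat by (intro nn_integral_cong) simp
    also have "\<dots> = (\<integral>\<^sup>+\<omega>. (\<integral>\<^sup>+w. h w (g (\<lambda>j\<in>{..<n} - I n l. W j \<omega>)) \<partial>F0) \<partial>M)"
      using i
      by (intro nn_integral_indep_component[OF prob_space_M prob_space_F0 indep
            identically_distributed _ _ g h]) auto
    also have "\<dots> \<le> (\<integral>\<^sup>+\<omega>. B \<partial>M)"
      using xhat_measurable[OF l] xhat by (intro nn_integral_mono bound) (metis measurable_space)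
    finally show ?thesis by (simp add: M.emeasure_space_1)
  qed
  have "(\<integral>\<^sup>+\<omega>. (\<Sum>l<L. \<Sum>i\<in>I n l. h (W i \<omega>) (xhat n l \<omega>)) \<partial>M)
      = (\<Sum>l<L. \<integral>\<^sup>+\<omega>. (\<Sum>i\<in>I n l. h (W i \<omega>) (xhat n l \<omega>)) \<partial>M)"
    by (rule nn_integral_sum) (auto intro!: borel_measurable_sum meas)
  also have "\<dots> = (\<Sum>l<L. \<Sum>i\<in>I n l. \<integral>\<^sup>+\<omega>. h (W i \<omega>) (xhat n l \<omega>) \<partial>M)"
    by (intro sum.cong refl nn_integral_sum) (auto intro: meas)
  also have "\<dots> \<le> (\<Sum>l<L. \<Sum>i\<in>I n l. B)"
    using term_le by (intro sum_mono) auto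
  also have "\<dots> = of_nat n * B"
    using sum_folds[where n=n and a="\<lambda>_. B"] by simp
  finally show ?thesis .
qed

definition cross_fit_mean :: "('w \<Rightarrow> 'x \<Rightarrow> real) \<Rightarrow> nat \<Rightarrow> 'a \<Rightarrow> real" where
  "cross_fit_mean h n \<omega> = (\<Sum>l<L. \<Sum>i\<in>I n l. h (W i \<omega>) (xhat n l \<omega>)) / real n"

lemma cross_fit_mean_nonneg: "(\<And>w x. 0 \<le> h w x) \<Longrightarrow> 0 \<le> cross_fit_mean h n \<omega>"
  by (simp add: cross_fit_mean_def sum_nonneg)

lemma measure_cross_fit_mean_ge:
  fixes h :: "'w \<Rightarrow> 'x \<Rightarrow> real"
  assumes h: "case_prod h \<in> borel_measurable (F0 \<Otimes>\<^sub>M X)" and h_nonneg: "\<And>w x. 0 \<le> h w x"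
    and c: "c > 0" and \<gamma>: "\<gamma> \<ge> 0" and n: "n > 0"
  shows "\<exists>A\<in>sets M. measure M A \<le> \<gamma> / c \<and> {\<omega>\<in>space M. c \<le> cross_fit_mean h n \<omega>}
    \<subseteq> {\<omega>\<in>space M. \<exists>l<L. ennreal \<gamma> < \<integral>\<^sup>+w. ennreal (h w (xhat n l \<omega>)) \<partial>F0} \<union> A"
proof -
  interpret F0: prob_space F0 by (rule prob_space_F0)
  define q where "q x = (\<integral>\<^sup>+w. ennreal (h w x) \<partial>F0)" for x
  have h'[measurable]: "(\<lambda>p. h (fst p) (snd p)) \<in> borel_measurable (F0 \<Otimes>\<^sub>M X)"
    using h by (simp add: case_prod_beta')
  have "(\<lambda>(w, x). ennreal (h w x)) \<in> borel_measurable (F0 \<Otimes>\<^sub>M X)"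
    unfolding case_prod_beta' by measurable
  then have q[measurable]: "q \<in> borel_measurable X"
    unfolding q_def by (rule borel_measurable_nn_integral_left[OF F0.sigma_finite_measure_axioms])
  \<comment> \<open>Truncating \<open>h\<close> where its conditional mean exceeds \<open>\<gamma>\<close> makes Markov's inequality
    applicable without any integrability of \<open>h\<close>.\<close>
  define ht where "ht w x = ennreal (h w x) * indicator {x. q x \<le> \<gamma>} x" for w x
  have ht: "case_prod ht \<in> borel_measurable (F0 \<Otimes>\<^sub>M X)"
    unfolding case_prod_beta' ht_def by measurable
  have ht_bound: "(\<integral>\<^sup>+w. ht w x \<partial>F0) \<le> ennreal \<gamma>" if "x \<in> space X" for x
  proof -
    have "(\<lambda>w. ennreal (h w x)) \<in> borel_measurable F0"
      using measurable_Pair1[OF h' that] by simp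
    then have "(\<integral>\<^sup>+w. ht w x \<partial>F0) = q x * indicator {x. q x \<le> \<gamma>} x"
      unfolding ht_def q_def by (rule nn_integral_multc)
    then show ?thesis by (simp add: indicator_def)
  qed
  define T where "T \<omega> = (\<Sum>l<L. \<Sum>i\<in>I n l. ht (W i \<omega>) (xhat n l \<omega>))" for \<omega>
  have T_meas: "T \<in> borel_measurable M"
    using measurable_comp[OF measurable_Pair[OF W_measurable xhat_measurable] ht]
    unfolding T_def by (intro borel_measurable_sum) (simp add: comp_def)
  have "(\<integral>\<^sup>+\<omega>. T \<omega> \<partial>M) \<le> of_nat n * ennreal \<gamma>"
    unfolding T_def by (rule nn_integral_cross_fit_sum_le[OF ht ht_bound])
  then have T_int: "(\<integral>\<^sup>+\<omega>. T \<omega> \<partial>M) \<le> ennreal (real n * \<gamma>)"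
    by (simp add: ennreal_mult \<gamma> ennreal_of_nat_eq_real_of_nat)
  define A where "A = {\<omega>\<in>space M. ennreal (c * real n) \<le> T \<omega>}"
  have "measure M A \<le> real n * \<gamma> / (c * real n)"
    unfolding A_def
    by (rule nn_integral_Markov_inequality_measure[OF finite_measure_M T_meas])
       (use c n \<gamma> T_int in auto)
  also have "\<dots> = \<gamma> / c"
    using n by simp
  finally have "measure M A \<le> \<gamma> / c" .
  moreover have "A \<in> sets M"
    using T_meas unfolding A_def by measurable
  moreover have "{\<omega>\<in>space M. c \<le> cross_fit_mean h n \<omega>}
    \<subseteq> {\<omega>\<in>space M. \<exists>l<L. ennreal \<gamma> < \<integral>\<^sup>+w. ennreal (h w (xhat n l \<omega>)) \<partial>F0} \<union> A"
  proof (intro subsetI)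
    fix \<omega> assume "\<omega> \<in> {\<omega>\<in>space M. c \<le> cross_fit_mean h n \<omega>}"
    then have \<omega>: "\<omega> \<in> space M" and avg: "c \<le> cross_fit_mean h n \<omega>" by auto
    show "\<omega> \<in> {\<omega>\<in>space M. \<exists>l<L. ennreal \<gamma> < \<integral>\<^sup>+w. ennreal (h w (xhat n l \<omega>)) \<partial>F0} \<union> A"
    proof (cases "\<forall>l<L. q (xhat n l \<omega>) \<le> ennreal \<gamma>")
      case True
      then have "T \<omega> = (\<Sum>l<L. \<Sum>i\<in>I n l. ennreal (h (W i \<omega>) (xhat n l \<omega>)))"
        unfolding T_def ht_def by (intro sum.cong refl) (simp add: indicator_def)
      also have "\<dots> = ennreal (\<Sum>l<L. \<Sum>i\<in>I n l. h (W i \<omega>) (xhat n l \<omega>))"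
        by (simp add: h_nonneg sum_nonneg)
      finally show ?thesis
        using avg n \<omega> by (simp add: A_def cross_fit_mean_def pos_le_divide_eq mult.commute ennreal_leI)
    qed (use \<omega> in \<open>auto simp: q_def not_le\<close>)
  qed
  ultimately show ?thesis by blast
qed

lemma conv_prob_cross_fit_mean_zero:
  fixes h :: "'w \<Rightarrow> 'x \<Rightarrow> real"
  assumes h: "case_prod h \<in> borel_measurable (F0 \<Otimes>\<^sub>M X)" and h_nonneg: "\<And>w x. 0 \<le> h w x"
    and cond_mean: "\<And>l. l < L \<Longrightarrow> conv_prob_zero_enn M (\<lambda>n \<omega>. \<integral>\<^sup>+w. ennreal (h w (xhat n l \<omega>)) \<partial>F0)"
  shows "conv_prob M (cross_fit_mean h) 0"
  unfolding conv_prob_iff_prob_vanishing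
proof (intro allI impI)
  fix \<epsilon> :: real assume \<epsilon>: "\<epsilon> > 0"
  show "prob_vanishing M (\<lambda>n. {\<omega>\<in>space M. \<epsilon> < dist (cross_fit_mean h n \<omega>) 0})"
  proof (rule prob_vanishing_approx[OF finite_measure_M])
    fix \<delta> :: real assume \<delta>: "\<delta> > 0"
    define F where "F n = (\<Union>l<L. {\<omega>\<in>space M. ennreal (\<epsilon> * \<delta>) < \<integral>\<^sup>+w. ennreal (h w (xhat n l \<omega>)) \<partial>F0})" for n
    have "prob_vanishing M F"
      unfolding F_def using cond_mean \<epsilon> \<delta>
      by (intro prob_vanishing_UN[OF finite_measure_M]) (auto simp: conv_prob_zero_enn_iff_prob_vanishing)
    moreover have "eventually (\<lambda>n. \<exists>A\<in>sets M. {\<omega>\<in>space M. \<epsilon> < dist (cross_fit_mean h n \<omega>) 0} \<inter> space M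
        \<subseteq> F n \<union> A \<and> measure M A \<le> \<delta>) sequentially"
      using eventually_gt_at_top[of 0]
    proof eventually_elim
      case (elim n)
      obtain A where "A \<in> sets M" "measure M A \<le> \<epsilon> * \<delta> / \<epsilon>"
        and A: "{\<omega>\<in>space M. \<epsilon> \<le> cross_fit_mean h n \<omega>}
          \<subseteq> {\<omega>\<in>space M. \<exists>l<L. ennreal (\<epsilon> * \<delta>) < \<integral>\<^sup>+w. ennreal (h w (xhat n l \<omega>)) \<partial>F0} \<union> A"
        using measure_cross_fit_mean_ge[OF h h_nonneg \<epsilon> _ elim, of "\<epsilon> * \<delta>"] \<epsilon> \<delta> by auto
      moreover have "{\<omega>\<in>space M. \<epsilon> < dist (cross_fit_mean h n \<omega>) 0} \<inter> space M
          \<subseteq> {\<omega>\<in>space M. \<epsilon> \<le> cross_fit_mean h n \<omega>}"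
        using cross_fit_mean_nonneg[OF h_nonneg] by auto
      ultimately show ?case
        using \<epsilon> unfolding F_def by (intro bexI[of _ A]) auto
    qed
    ultimately show "\<exists>F. prob_vanishing M F \<and> eventually (\<lambda>n. \<exists>A\<in>sets M.
        {\<omega>\<in>space M. \<epsilon> < dist (cross_fit_mean h n \<omega>) 0} \<inter> space M \<subseteq> F n \<union> A \<and> measure M A \<le> \<delta>)
        sequentially"
      by blast
  qed
qed

lemma conv_prob_mult_cross_fit_mean:
  fixes h :: "'w \<Rightarrow> 'x \<Rightarrow> real" and p :: "nat \<Rightarrow> 'a \<Rightarrow> real"
  assumes h: "case_prod h \<in> borel_measurable (F0 \<Otimes>\<^sub>M X)" and h_nonneg: "\<And>w x. 0 \<le> h w x"
    and p: "conv_prob M p 0" and p_nonneg: "\<And>n \<omega>. 0 \<le> p n \<omega>" and C: "C > 0"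
    and cond_mean_bounded: "prob_vanishing M (\<lambda>n. {\<omega>\<in>space M.
          \<exists>l<L. ennreal C < \<integral>\<^sup>+w. ennreal (h w (xhat n l \<omega>)) \<partial>F0})"
  shows "conv_prob M (\<lambda>n \<omega>. p n \<omega> * cross_fit_mean h n \<omega>) 0"
  unfolding conv_prob_iff_prob_vanishing
proof (intro allI impI)
  fix \<epsilon> :: real assume \<epsilon>: "\<epsilon> > 0"
  show "prob_vanishing M (\<lambda>n. {\<omega>\<in>space M. \<epsilon> < dist (p n \<omega> * cross_fit_mean h n \<omega>) 0})"
  proof (rule prob_vanishing_approx[OF finite_measure_M])
    fix \<delta> :: real assume \<delta>: "\<delta> > 0"
    define K where "K = C / \<delta>"
    have K: "K > 0" using C \<delta> by (simp add: K_def)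
    define F where "F n = {\<omega>\<in>space M. \<epsilon> / K < dist (p n \<omega>) 0} \<union>
      {\<omega>\<in>space M. \<exists>l<L. ennreal C < \<integral>\<^sup>+w. ennreal (h w (xhat n l \<omega>)) \<partial>F0}" for n
    have "prob_vanishing M F"
      unfolding F_def using p \<epsilon> K
      by (intro prob_vanishing_Un[OF finite_measure_M] cond_mean_bounded)
         (simp add: conv_prob_iff_prob_vanishing)
    moreover have "eventually (\<lambda>n. \<exists>A\<in>sets M.
        {\<omega>\<in>space M. \<epsilon> < dist (p n \<omega> * cross_fit_mean h n \<omega>) 0} \<inter> space M
          \<subseteq> F n \<union> A \<and> measure M A \<le> \<delta>) sequentially"
      using eventually_gt_at_top[of 0]
    proof eventually_elim
      case (elim n)
      obtain A where "A \<in> sets M" "measure M A \<le> C / K"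
        and A: "{\<omega>\<in>space M. K \<le> cross_fit_mean h n \<omega>}
          \<subseteq> {\<omega>\<in>space M. \<exists>l<L. ennreal C < \<integral>\<^sup>+w. ennreal (h w (xhat n l \<omega>)) \<partial>F0} \<union> A"
        using measure_cross_fit_mean_ge[OF h h_nonneg K _ elim, of C] C by auto
      moreover have "\<epsilon> / K < p n \<omega> \<or> K \<le> cross_fit_mean h n \<omega>"
        if "\<epsilon> < p n \<omega> * cross_fit_mean h n \<omega>" for \<omega>
      proof (rule ccontr)
        assume "\<not> (\<epsilon> / K < p n \<omega> \<or> K \<le> cross_fit_mean h n \<omega>)"
        then have "p n \<omega> * cross_fit_mean h n \<omega> \<le> \<epsilon> / K * K"
          using p_nonneg[of n \<omega>] cross_fit_mean_nonneg[OF h_nonneg] by (intro mult_mono) auto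
        with that K show False by simp
      qed
      ultimately show ?case
        using C \<delta> p_nonneg cross_fit_mean_nonneg[OF h_nonneg]
        unfolding F_def K_def by (intro bexI[of _ A]) (auto simp: abs_mult)
    qed
    ultimately show "\<exists>F. prob_vanishing M F \<and> eventually (\<lambda>n. \<exists>A\<in>sets M.
        {\<omega>\<in>space M. \<epsilon> < dist (p n \<omega> * cross_fit_mean h n \<omega>) 0} \<inter> space M
          \<subseteq> F n \<union> A \<and> measure M A \<le> \<delta>) sequentially"
      by blast
  qed
qed

lemma norm_cross_fit_decomposition:
  fixes A B :: "nat \<Rightarrow> nat \<Rightarrow> real^'d^'q" and C :: "nat \<Rightarrow> real^'d^'q" and e :: "nat \<Rightarrow> nat \<Rightarrow> real"
  assumes bound: "\<And>l i. l < L \<Longrightarrow> i \<in> I n l \<Longrightarrow> norm (A l i - B l i) \<le> e l i * \<rho>"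
  shows "norm ((1 / real n) *\<^sub>R (\<Sum>l<L. \<Sum>i\<in>I n l. A l i) - Y)
     \<le> \<rho> * ((\<Sum>l<L. \<Sum>i\<in>I n l. e l i) / real n)
       + (\<Sum>s\<in>UNIV. \<Sum>k\<in>UNIV. (\<Sum>l<L. \<Sum>i\<in>I n l. \<bar>B l i $ s $ k - C i $ s $ k\<bar>) / real n)
       + (\<Sum>s\<in>UNIV. \<Sum>k\<in>UNIV. \<bar>(\<Sum>i<n. C i $ s $ k) / real n - Y $ s $ k\<bar>)"
proof -
  let ?c = "1 / real n"
  have "norm (?c *\<^sub>R (\<Sum>l<L. \<Sum>i\<in>I n l. A l i) - Y)
      \<le> norm (?c *\<^sub>R (\<Sum>l<L. \<Sum>i\<in>I n l. A l i - B l i)) + norm (?c *\<^sub>R (\<Sum>l<L. \<Sum>i\<in>I n l. B l i) - Y)"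
    by (rule order_trans[OF _ norm_triangle_ineq]) (simp add: sum_subtractf algebra_simps)
  moreover have "norm (?c *\<^sub>R (\<Sum>l<L. \<Sum>i\<in>I n l. A l i - B l i)) \<le> \<rho> * ((\<Sum>l<L. \<Sum>i\<in>I n l. e l i) / real n)"
  proof -
    have "norm (\<Sum>l<L. \<Sum>i\<in>I n l. A l i - B l i) \<le> (\<Sum>l<L. \<Sum>i\<in>I n l. e l i * \<rho>)"
      by (intro order_trans[OF norm_sum] sum_mono order_trans[OF norm_sum] bound) auto
    also have "\<dots> = \<rho> * (\<Sum>l<L. \<Sum>i\<in>I n l. e l i)"
      by (simp add: sum_distrib_left mult.commute)
    finally show ?thesis
      by (simp add: divide_right_mono)
  qed
  moreover have "\<bar>(?c *\<^sub>R (\<Sum>l<L. \<Sum>i\<in>I n l. B l i) - Y) $ s $ k\<bar>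
      \<le> (\<Sum>l<L. \<Sum>i\<in>I n l. \<bar>B l i $ s $ k - C i $ s $ k\<bar>) / real n
        + \<bar>(\<Sum>i<n. C i $ s $ k) / real n - Y $ s $ k\<bar>" for s k
  proof -
    let ?D = "\<Sum>l<L. \<Sum>i\<in>I n l. B l i $ s $ k - C i $ s $ k"
    let ?b = "(\<Sum>i<n. C i $ s $ k) / real n - Y $ s $ k"
    have eq: "(?c *\<^sub>R (\<Sum>l<L. \<Sum>i\<in>I n l. B l i) - Y) $ s $ k = ?D / real n + ?b"
      using sum_folds[where a="\<lambda>i. C i $ s $ k" and n=n]
      by (simp add: sum_subtractf diff_divide_distrib)
    have "\<bar>?D\<bar> \<le> (\<Sum>l<L. \<Sum>i\<in>I n l. \<bar>B l i $ s $ k - C i $ s $ k\<bar>)"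
      by (intro order_trans[OF sum_abs] sum_mono sum_abs)
    then have "\<bar>?D / real n\<bar> \<le> (\<Sum>l<L. \<Sum>i\<in>I n l. \<bar>B l i $ s $ k - C i $ s $ k\<bar>) / real n"
      by (simp add: divide_right_mono)
    then show ?thesis
      unfolding eq using abs_triangle_ineq[of "?D / real n" ?b] by linarith
  qed
  then have "norm (?c *\<^sub>R (\<Sum>l<L. \<Sum>i\<in>I n l. B l i) - Y)
      \<le> (\<Sum>s\<in>UNIV. \<Sum>k\<in>UNIV. (\<Sum>l<L. \<Sum>i\<in>I n l. \<bar>B l i $ s $ k - C i $ s $ k\<bar>) / real n)
        + (\<Sum>s\<in>UNIV. \<Sum>k\<in>UNIV. \<bar>(\<Sum>i<n. C i $ s $ k) / real n - Y $ s $ k\<bar>)"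
    by (intro order_trans[OF norm_le_sum_abs_entries]) (simp add: sum.distrib[symmetric] sum_mono)
  ultimately show ?thesis by linarith
qed

end

section \<open>Consistency of the cross-fitted Jacobian\<close>

locale cross_fit_jacobian = cross_fitting M F0 W X xhat L I
  for M :: "'a measure" and F0 :: "'w measure" and W :: "nat \<Rightarrow> 'a \<Rightarrow> 'w"
    and X :: "'x measure" and xhat :: "nat \<Rightarrow> nat \<Rightarrow> 'a \<Rightarrow> 'x"
    and L :: nat and I :: "nat \<Rightarrow> nat \<Rightarrow> nat set" +
  fixes f :: "'w \<Rightarrow> 'x \<Rightarrow> real^'d \<Rightarrow> real^'q" and x0 :: 'x
    and \<theta>0 :: "real^'d" and \<theta>bar :: "nat \<Rightarrow> 'a \<Rightarrow> real^'d" and N :: "(real^'d) set"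
    and regular :: "'x \<Rightarrow> bool" and d :: "'w \<Rightarrow> 'x \<Rightarrow> real" and C1 C2 :: real
  assumes jacobian_measurable: "(\<lambda>(w, x). jacobian (f w x) (at \<theta>0)) \<in> borel_measurable (F0 \<Otimes>\<^sub>M X)"
    and jacobian_integrable: "integrable F0 (\<lambda>w. jacobian (f w x0) (at \<theta>0))"
    and open_N: "open N" and \<theta>0_in_N: "\<theta>0 \<in> N"
    and regular_eventually: "\<And>l. l < L \<Longrightarrow> prob_vanishing M (\<lambda>n. {\<omega>\<in>space M. \<not> regular (xhat n l \<omega>)})"
    and regular_differentiable:
      "\<And>x w \<theta>. regular x \<Longrightarrow> w \<in> space F0 \<Longrightarrow> \<theta> \<in> N \<Longrightarrow> f w x differentiable (at \<theta>)"
    and regular_jacobian_holder: "\<And>x w \<theta>. regular x \<Longrightarrow> w \<in> space F0 \<Longrightarrow> \<theta> \<in> N \<Longrightarrow>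
          norm (jacobian (f w x) (at \<theta>) - jacobian (f w x) (at \<theta>0)) \<le> d w x * norm (\<theta> - \<theta>0) powr C1"
    and regular_integral_d: "\<And>x. regular x \<Longrightarrow> (\<integral>\<^sup>+w. ennreal (d w x) \<partial>F0) \<le> ennreal C2"
    and d_measurable: "case_prod d \<in> borel_measurable (F0 \<Otimes>\<^sub>M X)"
    and C1_pos: "C1 > 0" and C2_pos: "C2 > 0"
    and jacobian_consistent: "\<And>l s k. l < L \<Longrightarrow> conv_prob_zero_enn M (\<lambda>n \<omega>. \<integral>\<^sup>+w.
          ennreal \<bar>jacobian (f w (xhat n l \<omega>)) (at \<theta>0) $ s $ k - jacobian (f w x0) (at \<theta>0) $ s $ k\<bar> \<partial>F0)"
    and \<theta>bar_consistent: "conv_prob M \<theta>bar \<theta>0"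
begin

definition jacobian_error :: "'q \<Rightarrow> 'd \<Rightarrow> 'w \<Rightarrow> 'x \<Rightarrow> real" where
  "jacobian_error s k w x = \<bar>jacobian (f w x) (at \<theta>0) $ s $ k - jacobian (f w x0) (at \<theta>0) $ s $ k\<bar>"

definition mean_deviation :: "'q \<Rightarrow> 'd \<Rightarrow> nat \<Rightarrow> 'a \<Rightarrow> real" where
  "mean_deviation s k n \<omega> = \<bar>(\<Sum>i<n. jacobian (f (W i \<omega>) x0) (at \<theta>0) $ s $ k) / real n
     - (\<integral>w. jacobian (f w x0) (at \<theta>0) \<partial>F0) $ s $ k\<bar>"

lemma prob_vanishing_not_regular: "prob_vanishing M (\<lambda>n. \<Union>l<L. {\<omega>\<in>space M. \<not> regular (xhat n l \<omega>)})"
  using regular_eventually by (intro prob_vanishing_UN[OF finite_measure_M finite_lessThan]) auto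

(* The bounds on d do not make it nonnegative, so the cross-fitted average is taken of max 0 d. *)

lemma conv_prob_holder_term:
  "conv_prob M (\<lambda>n \<omega>. norm (\<theta>bar n \<omega> - \<theta>0) powr C1 * cross_fit_mean (\<lambda>w x. max 0 (d w x)) n \<omega>) 0"
proof (rule conv_prob_mult_cross_fit_mean[OF _ _ _ _ C2_pos])
  show "(\<lambda>(w, x). max 0 (d w x)) \<in> borel_measurable (F0 \<Otimes>\<^sub>M X)"
    using d_measurable unfolding case_prod_beta' by measurable
  show "conv_prob M (\<lambda>n \<omega>. norm (\<theta>bar n \<omega> - \<theta>0) powr C1) 0"
    using conv_prob_dist_powr[OF \<theta>bar_consistent C1_pos] by (simp add: dist_norm)
  have "{\<omega>\<in>space M. \<exists>l<L. ennreal C2 < \<integral>\<^sup>+w. ennreal (max 0 (d w (xhat n l \<omega>))) \<partial>F0} \<inter> space M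
      \<subseteq> (\<Union>l<L. {\<omega>\<in>space M. \<not> regular (xhat n l \<omega>)})" for n
  proof (intro subsetI)
    fix \<omega>
    assume "\<omega> \<in> {\<omega>\<in>space M. \<exists>l<L. ennreal C2 < \<integral>\<^sup>+w. ennreal (max 0 (d w (xhat n l \<omega>))) \<partial>F0} \<inter> space M"
    then obtain l where "l < L" "\<omega> \<in> space M"
      and "ennreal C2 < \<integral>\<^sup>+w. ennreal (max 0 (d w (xhat n l \<omega>))) \<partial>F0"
      by blast
    moreover from this(3) have "\<not> regular (xhat n l \<omega>)"
      using regular_integral_d[of "xhat n l \<omega>"] by (auto simp: not_le[symmetric])
    ultimately show "\<omega> \<in> (\<Union>l<L. {\<omega>\<in>space M. \<not> regular (xhat n l \<omega>)})" by blast
  qed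
  then show "prob_vanishing M (\<lambda>n. {\<omega>\<in>space M.
      \<exists>l<L. ennreal C2 < \<integral>\<^sup>+w. ennreal (max 0 (d w (xhat n l \<omega>))) \<partial>F0})"
    by (intro prob_vanishing_mono[OF prob_vanishing_not_regular] always_eventually allI)
qed simp_all

lemma conv_prob_cross_fit_term: "conv_prob M (cross_fit_mean (jacobian_error s k)) 0"
proof (rule conv_prob_cross_fit_mean_zero)
  have [measurable]: "(\<lambda>p. jacobian (f (fst p) (snd p)) (at \<theta>0)) \<in> borel_measurable (F0 \<Otimes>\<^sub>M X)"
    using jacobian_measurable by (simp add: case_prod_beta')
  have [measurable]: "(\<lambda>w. jacobian (f w x0) (at \<theta>0)) \<in> borel_measurable F0"
    using jacobian_integrable by auto
  show "case_prod (jacobian_error s k) \<in> borel_measurable (F0 \<Otimes>\<^sub>M X)"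
    unfolding jacobian_error_def case_prod_beta' by measurable
qed (simp_all add: jacobian_error_def jacobian_consistent)

lemma conv_prob_mean_deviation: "conv_prob M (mean_deviation s k) 0"
proof -
  have "conv_prob M (\<lambda>n \<omega>. (\<Sum>i<n. jacobian (f (W i \<omega>) x0) (at \<theta>0) $ s $ k) / real n)
      (\<integral>w. jacobian (f w x0) (at \<theta>0) $ s $ k \<partial>F0)"
    by (rule weak_law_of_large_numbers[OF prob_space_M prob_space_F0 indep identically_distributed
          integrable_bounded_linear[OF bounded_linear_matrix_entry jacobian_integrable]])
  then have "conv_prob M (\<lambda>n \<omega>. dist ((\<Sum>i<n. jacobian (f (W i \<omega>) x0) (at \<theta>0) $ s $ k) / real n)
      (\<integral>w. jacobian (f w x0) (at \<theta>0) $ s $ k \<partial>F0)) 0"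
    by (rule conv_prob_iff_dist_zero[THEN iffD1])
  moreover have "(\<integral>w. jacobian (f w x0) (at \<theta>0) $ s $ k \<partial>F0) = (\<integral>w. jacobian (f w x0) (at \<theta>0) \<partial>F0) $ s $ k"
    by (rule integral_bounded_linear[OF bounded_linear_matrix_entry jacobian_integrable])
  ultimately show ?thesis
    by (simp add: dist_real_def mean_deviation_def[abs_def])
qed

lemma dist_jacobian_cross_fit_le:
  assumes \<omega>: "\<omega> \<in> space M" and \<theta>bar: "\<theta>bar n \<omega> \<in> N" and xhat_regular: "\<forall>l<L. regular (xhat n l \<omega>)"
  shows "dist (jacobian (\<lambda>\<theta>. (1 / real n) *\<^sub>R (\<Sum>l<L. \<Sum>i\<in>I n l. f (W i \<omega>) (xhat n l \<omega>) \<theta>)) (at (\<theta>bar n \<omega>)))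
      (\<integral>w. jacobian (f w x0) (at \<theta>0) \<partial>F0)
    \<le> norm (\<theta>bar n \<omega> - \<theta>0) powr C1 * cross_fit_mean (\<lambda>w x. max 0 (d w x)) n \<omega>
      + (\<Sum>s\<in>UNIV. \<Sum>k\<in>UNIV. cross_fit_mean (jacobian_error s k) n \<omega>)
      + (\<Sum>s\<in>UNIV. \<Sum>k\<in>UNIV. mean_deviation s k n \<omega>)"
proof -
  have W_space: "W i \<omega> \<in> space F0" for i
    using measurable_space[OF W_measurable \<omega>] .
  have "(f (W i \<omega>) (xhat n l \<omega>) has_derivative
      (\<lambda>h. jacobian (f (W i \<omega>) (xhat n l \<omega>)) (at (\<theta>bar n \<omega>)) *v h)) (at (\<theta>bar n \<omega>))" if "l < L" for l i
    using regular_differentiable[OF xhat_regular[rule_format, OF that] W_space \<theta>bar] by (simp add: jacobian_works)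
  then have "jacobian (\<lambda>\<theta>. (1 / real n) *\<^sub>R (\<Sum>l<L. \<Sum>i\<in>I n l. f (W i \<omega>) (xhat n l \<omega>) \<theta>)) (at (\<theta>bar n \<omega>))
      = (1 / real n) *\<^sub>R (\<Sum>l<L. \<Sum>i\<in>I n l. jacobian (f (W i \<omega>) (xhat n l \<omega>)) (at (\<theta>bar n \<omega>)))"
    by (intro jacobian_eqI has_derivative_scaleR_matrix has_derivative_sum_matrix) auto
  moreover have "norm (jacobian (f (W i \<omega>) (xhat n l \<omega>)) (at (\<theta>bar n \<omega>)) - jacobian (f (W i \<omega>) (xhat n l \<omega>)) (at \<theta>0))
      \<le> max 0 (d (W i \<omega>) (xhat n l \<omega>)) * norm (\<theta>bar n \<omega> - \<theta>0) powr C1" if "l < L" for l i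
    using regular_jacobian_holder[OF xhat_regular[rule_format, OF that] W_space \<theta>bar]
    by (rule order_trans) (intro mult_right_mono; simp)
  ultimately show ?thesis
    unfolding dist_norm cross_fit_mean_def jacobian_error_def mean_deviation_def
    by (simp only:) (intro norm_cross_fit_decomposition, simp add: mult.commute)
qed

theorem conv_prob_jacobian_cross_fit:
  "conv_prob M (\<lambda>n \<omega>. jacobian (\<lambda>\<theta>. (1 / real n) *\<^sub>R (\<Sum>l<L. \<Sum>i\<in>I n l. f (W i \<omega>) (xhat n l \<omega>) \<theta>))
     (at (\<theta>bar n \<omega>))) (\<integral>w. jacobian (f w x0) (at \<theta>0) \<partial>F0)"
proof -
  obtain r where r: "r > 0" "ball \<theta>0 r \<subseteq> N"
    using open_N \<theta>0_in_N open_contains_ball by blast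
  define Bad where "Bad n = {\<omega>\<in>space M. r / 2 < dist (\<theta>bar n \<omega>) \<theta>0}
    \<union> (\<Union>l<L. {\<omega>\<in>space M. \<not> regular (xhat n l \<omega>)})" for n
  have "prob_vanishing M (\<lambda>n. {\<omega>\<in>space M. r / 2 < dist (\<theta>bar n \<omega>) \<theta>0})"
    using \<theta>bar_consistent r(1) unfolding conv_prob_iff_prob_vanishing by (meson half_gt_zero)
  then have bad: "prob_vanishing M Bad"
    unfolding Bad_def by (intro prob_vanishing_Un finite_measure_M prob_vanishing_not_regular)
  have regular_outside: "\<theta>bar n \<omega> \<in> N" "\<forall>l<L. regular (xhat n l \<omega>)"
    if "\<omega> \<in> space M" "\<omega> \<notin> Bad n" for n \<omega>
    using that r by (auto simp: Bad_def dist_commute)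
  have bound: "conv_prob M (\<lambda>n \<omega>. norm (\<theta>bar n \<omega> - \<theta>0) powr C1 * cross_fit_mean (\<lambda>w x. max 0 (d w x)) n \<omega>
      + (\<Sum>s\<in>UNIV. \<Sum>k\<in>UNIV. cross_fit_mean (jacobian_error s k) n \<omega>)
      + (\<Sum>s\<in>UNIV. \<Sum>k\<in>UNIV. mean_deviation s k n \<omega>)) 0"
    by (intro conv_prob_zero_add[OF finite_measure_M] conv_prob_zero_sum[OF finite_measure_M] finite_UNIV
        conv_prob_holder_term conv_prob_cross_fit_term conv_prob_mean_deviation) simp_all
  show ?thesis
    by (rule conv_prob_dominated[OF finite_measure_M bound bad], intro always_eventually allI ballI,
        rule dist_jacobian_cross_fit_le) (simp_all add: regular_outside)
qed

end

theorem lemma20: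
  fixes M :: "'a measure"
    and F0 :: "('y \<times> 'v \<times> 'z) measure"
    and W :: "nat \<Rightarrow> 'a \<Rightarrow> 'y \<times> 'v \<times> 'z"
    and m :: "'j::finite \<Rightarrow> 'y \<Rightarrow> 'v \<Rightarrow> real^'d \<Rightarrow> 'e::real_normed_vector \<Rightarrow> real"
    and Zsub :: "'j \<Rightarrow> 'z \<Rightarrow> 'u"
    and \<theta>0 :: "real^'d"
    and \<eta>0 :: "'e"
    and Xi :: "'e set"
    and \<kappa>0 :: "'j \<Rightarrow> 'z \<Rightarrow> real^'q"
    and L :: nat
    and I :: "nat \<Rightarrow> nat \<Rightarrow> nat set"
    and MEta :: "'e measure"
    and MK :: "('j \<Rightarrow> 'z \<Rightarrow> real^'q) measure"
    and \<eta>hat :: "nat \<Rightarrow> nat \<Rightarrow> 'a \<Rightarrow> 'e"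
    and \<kappa>hat :: "nat \<Rightarrow> nat \<Rightarrow> 'a \<Rightarrow> 'j \<Rightarrow> 'z \<Rightarrow> real^'q"
    and \<theta>bar :: "nat \<Rightarrow> 'a \<Rightarrow> real^'d"
    and \<Upsilon> :: "real^'d^'q"
    and N :: "(real^'d) set"
  assumes M: "prob_space M"
    and F0: "prob_space F0"
    and iid: "prob_space.indep_vars M (\<lambda>_. F0) W UNIV" "\<And>i. distr M F0 (W i) = F0"
    and \<eta>0: "\<eta>0 \<in> Xi" and \<kappa>0: "\<kappa>0 \<in> kappa_class Zsub"
    and L: "L > 0"
    and folds: "\<And>n. (\<Union>l<L. I n l) = {..<n}" "\<And>n. disjoint_family_on (I n) {..<L}"
    and \<eta>hat_vals: "\<And>n l \<omega>. l < L \<Longrightarrow> \<eta>hat n l \<omega> \<in> Xi"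
    and \<kappa>hat_vals: "\<And>n l \<omega>. l < L \<Longrightarrow> \<kappa>hat n l \<omega> \<in> kappa_class Zsub"
    and \<eta>hat_outside: "\<And>n l. l < L \<Longrightarrow> \<exists>g. g \<in> measurable (PiM ({..<n} - I n l) (\<lambda>_. F0)) MEta \<and>
            (\<forall>\<omega>\<in>space M. \<eta>hat n l \<omega> = g (\<lambda>i\<in>{..<n} - I n l. W i \<omega>))"
    and \<kappa>hat_outside: "\<And>n l. l < L \<Longrightarrow> \<exists>g. g \<in> measurable (PiM ({..<n} - I n l) (\<lambda>_. F0)) MK \<and>
            (\<forall>\<omega>\<in>space M. \<kappa>hat n l \<omega> = g (\<lambda>i\<in>{..<n} - I n l. W i \<omega>))"
    and jac_meas: "\<And>\<theta>. (\<lambda>(w, e, k). jacobian (\<lambda>t. psi m w t e k) (at \<theta>))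
            \<in> borel_measurable (F0 \<Otimes>\<^sub>M (MEta \<Otimes>\<^sub>M MK))"
    and \<Upsilon>_int: "integrable F0 (\<lambda>w. jacobian (\<lambda>t. psi m w t \<eta>0 \<kappa>0) (at \<theta>0))"
    and \<Upsilon>_def: "\<Upsilon> = (\<integral>w. jacobian (\<lambda>t. psi m w t \<eta>0 \<kappa>0) (at \<theta>0) \<partial>F0)"
    and N: "open N" "\<theta>0 \<in> N"
    and cond_i: "\<And>l. l < L \<Longrightarrow> conv_prob_zero_enn M
            (\<lambda>n \<omega>. ennreal (norm (\<eta>hat n l \<omega> - \<eta>0)) * kappa_L2 F0 (\<kappa>hat n l \<omega>) \<kappa>0)"
    and cond_ii: "\<exists>\<delta>>0. \<exists>C1>0. \<exists>C2>0. \<exists>d :: 'y \<times> 'v \<times> 'z \<Rightarrow> 'e \<Rightarrow> ('j \<Rightarrow> 'z \<Rightarrow> real^'q) \<Rightarrow> real.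
            (\<lambda>(w, e, k). d w e k) \<in> borel_measurable (F0 \<Otimes>\<^sub>M (MEta \<Otimes>\<^sub>M MK)) \<and>
            (\<forall>e\<in>Xi. \<forall>k\<in>kappa_class Zsub.
               ennreal (norm (e - \<eta>0)) * kappa_L2 F0 k \<kappa>0 < ennreal \<delta> \<longrightarrow>
                 (\<forall>w\<in>space F0. \<forall>\<theta>\<in>N. (\<lambda>t. psi m w t e k) differentiable (at \<theta>)) \<and>
                 (\<forall>w\<in>space F0. \<forall>\<theta>\<in>N.
                    norm (jacobian (\<lambda>t. psi m w t e k) (at \<theta>) - jacobian (\<lambda>t. psi m w t e k) (at \<theta>0))
                      \<le> d w e k * norm (\<theta> - \<theta>0) powr C1) \<and>
                 (\<integral>\<^sup>+ w. ennreal (d w e k) \<partial>F0) < ennreal C2)"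
    and cond_iii: "\<And>l s k. l < L \<Longrightarrow> conv_prob_zero_enn M
            (\<lambda>n \<omega>. \<integral>\<^sup>+ w. ennreal \<bar>jacobian (\<lambda>t. psi m w t (\<eta>hat n l \<omega>) (\<kappa>hat n l \<omega>)) (at \<theta>0) $ s $ k
                                 - jacobian (\<lambda>t. psi m w t \<eta>0 \<kappa>0) (at \<theta>0) $ s $ k\<bar> \<partial>F0)"
    and \<theta>bar: "conv_prob M \<theta>bar \<theta>0"
  shows "conv_prob M
           (\<lambda>n \<omega>. jacobian (psi_hat m L (I n) (\<lambda>i. W i \<omega>) (\<lambda>l. \<eta>hat n l \<omega>) (\<lambda>l. \<kappa>hat n l \<omega>) n)
                      (at (\<theta>bar n \<omega>))) \<Upsilon>"
proof -
  obtain \<delta> C1 C2 and d :: "'y \<times> 'v \<times> 'z \<Rightarrow> 'e \<Rightarrow> ('j \<Rightarrow> 'z \<Rightarrow> real^'q) \<Rightarrow> real"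
    where \<delta>: "\<delta> > 0" and C1: "C1 > 0" and C2: "C2 > 0"
      and d_meas: "(\<lambda>(w, e, k). d w e k) \<in> borel_measurable (F0 \<Otimes>\<^sub>M (MEta \<Otimes>\<^sub>M MK))"
      and local_regularity: "\<And>e k. e \<in> Xi \<Longrightarrow> k \<in> kappa_class Zsub \<Longrightarrow>
          ennreal (norm (e - \<eta>0)) * kappa_L2 F0 k \<kappa>0 < ennreal \<delta> \<Longrightarrow>
          (\<forall>w\<in>space F0. \<forall>\<theta>\<in>N. (\<lambda>t. psi m w t e k) differentiable (at \<theta>)) \<and>
          (\<forall>w\<in>space F0. \<forall>\<theta>\<in>N. norm (jacobian (\<lambda>t. psi m w t e k) (at \<theta>) - jacobian (\<lambda>t. psi m w t e k) (at \<theta>0))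
             \<le> d w e k * norm (\<theta> - \<theta>0) powr C1) \<and>
          (\<integral>\<^sup>+ w. ennreal (d w e k) \<partial>F0) < ennreal C2"
    using cond_ii by metis
  define regular where "regular x \<longleftrightarrow> fst x \<in> Xi \<and> snd x \<in> kappa_class Zsub \<and>
      ennreal (norm (fst x - \<eta>0)) * kappa_L2 F0 (snd x) \<kappa>0 < ennreal \<delta>" for x
  interpret cross_fit_jacobian M F0 W "MEta \<Otimes>\<^sub>M MK" "\<lambda>n l \<omega>. (\<eta>hat n l \<omega>, \<kappa>hat n l \<omega>)" L I
    "\<lambda>w x \<theta>. psi m w \<theta> (fst x) (snd x)" "(\<eta>0, \<kappa>0)" \<theta>0 \<theta>bar N regular "\<lambda>w x. d w (fst x) (snd x)" C1 C2
  proof (intro cross_fit_jacobian.intro cross_fitting.intro cross_fit_jacobian_axioms.intro)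
    show "\<exists>g\<in>measurable (PiM ({..<n} - I n l) (\<lambda>_. F0)) (MEta \<Otimes>\<^sub>M MK).
        \<forall>\<omega>\<in>space M. (\<eta>hat n l \<omega>, \<kappa>hat n l \<omega>) = g (\<lambda>i\<in>{..<n} - I n l. W i \<omega>)" if "l < L" for n l
      using \<eta>hat_outside[OF that] \<kappa>hat_outside[OF that]
      by (intro ex_measurable_factor_Pair) (simp_all add: Bex_def)
  next
    fix l assume "l < L"
    have "{\<omega>\<in>space M. \<not> regular (\<eta>hat n l \<omega>, \<kappa>hat n l \<omega>)} \<inter> space M \<subseteq> {\<omega>\<in>space M.
        ennreal \<delta> \<le> ennreal (norm (\<eta>hat n l \<omega> - \<eta>0)) * kappa_L2 F0 (\<kappa>hat n l \<omega>) \<kappa>0}" for n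
      using \<eta>hat_vals[OF \<open>l < L\<close>] \<kappa>hat_vals[OF \<open>l < L\<close>] by (auto simp: regular_def not_less)
    then show "prob_vanishing M (\<lambda>n. {\<omega>\<in>space M. \<not> regular (\<eta>hat n l \<omega>, \<kappa>hat n l \<omega>)})"
      by (intro prob_vanishing_mono[OF prob_vanishing_conv_prob_zero_enn_ge[OF cond_i[OF \<open>l < L\<close>] \<delta>]]
          always_eventually allI)
  next
    fix x w \<theta> assume "regular x" "w \<in> space F0" "\<theta> \<in> N"
    with local_regularity[of "fst x" "snd x"]
    show "(\<lambda>t. psi m w t (fst x) (snd x)) differentiable (at \<theta>)"
      and "norm (jacobian (\<lambda>t. psi m w t (fst x) (snd x)) (at \<theta>) - jacobian (\<lambda>t. psi m w t (fst x) (snd x)) (at \<theta>0))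
        \<le> d w (fst x) (snd x) * norm (\<theta> - \<theta>0) powr C1"
      unfolding regular_def by blast+
  next
    fix x assume "regular x"
    then show "(\<integral>\<^sup>+w. ennreal (d w (fst x) (snd x)) \<partial>F0) \<le> ennreal C2"
      using local_regularity[of "fst x" "snd x"] by (auto simp: regular_def less_imp_le)
  next
    show "(\<lambda>(w, x). jacobian (\<lambda>t. psi m w t (fst x) (snd x)) (at \<theta>0)) \<in> borel_measurable (F0 \<Otimes>\<^sub>M (MEta \<Otimes>\<^sub>M MK))"
      using jac_meas[of \<theta>0] by (simp add: case_prod_beta')
    show "(\<lambda>(w, x). d w (fst x) (snd x)) \<in> borel_measurable (F0 \<Otimes>\<^sub>M (MEta \<Otimes>\<^sub>M MK))"
      using d_meas by (simp add: case_prod_beta')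
  qed (simp_all add: M F0 iid folds N C1 C2 \<Upsilon>_int cond_iii \<theta>bar)
  show ?thesis
    using conv_prob_jacobian_cross_fit by (simp add: psi_hat_def[abs_def] \<Upsilon>_def)
qed

end
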